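(* For every $n\ge1$, $\mathfrak{S}^{\mathrm{BPD}}=w_0\odot\prod_{1\le i<j\le n}(x_i-\theta_j)$, where the product may be taken in any order.
   Context: Permutations in one-line notation, $w_0=[n,\dots,1]$, $wt_{i,j}$ is $w$ with positions $i<j$ swapped, $\ell$ the number of inversions, $u\lessdot w$ iff $w=ut_{i,j}$ with $\ell(w)=\ell(u)+1$. Fomin–Kirillov algebra $\mathcal{E}_n$: generators $d_{i,j}$ ($1\le i<j\le n$), relations $d_{i,j}^2=0$; $d_{i,j}d_{j,k}=d_{i,k}d_{i,j}+d_{j,k}d_{i,k}$ and $d_{j,k}d_{i,j}=d_{i,j}d_{i,k}+d_{i,k}d_{j,k}$ ($i<j<k$); $d_{i,j}d_{k,l}=d_{k,l}d_{i,j}$ ($i,j,k,l$ distinct). Right action on $\mathbb{Q}[S_n]$: $w\odot d_{i,j}=wt_{i,j}$ if $wt_{i,j}\lessdot w$, else $0$; extended to $\mathbb{Q}[x_1,\dots,x_{n-1}]\otimes\mathcal{E}_n$ acting on $\mathbb{Q}[x_1,\dots,x_{n-1}][S_n]$ by $(fw)\odot(g\otimes e)=fg(w\odot e)$. $B_{i,j}=d_{1,j}+\dots+d_{i,j}$; $R_i(x_i)=(x_i+B_{i,i+1})\cdots(x_i+B_{i,n})$; $\mathfrak{S}^{\mathrm{BPD}}=w_0\odot(R_1(x_1)\cdots R_{n-1}(x_{n-1}))$. The Dunkl elements are $\theta_i=-\sum_{j<i}d_{j,i}+\sum_{j>i}d_{i,j}\in\mathcal{E}_n$ for $i\in[n]$;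 they pairwise commute (Fomin–Kirillov), so the factors $x_i-\theta_j$ pairwise commute. *)

theory Defs
  imports "HOL-Combinatorics.Combinatorics" "HOL-Library.Poly_Mapping"
begin

text \<open>A permutation w of [n] is a function nat => nat with w permutes {1..n};
  its one-line notation is [w 1, ..., w n].  w t_{i,j} (positions i,j swapped)
  is w o transpose i j.\<close>

definition inv_count :: "nat \<Rightarrow> (nat \<Rightarrow> nat) \<Rightarrow> nat" where
  "inv_count n w = card {(i, j). 1 \<le> i \<and> i < j \<and> j \<le> n \<and> w i > w j}"

definition covers :: "nat \<Rightarrow> (nat \<Rightarrow> nat) \<Rightarrow> (nat \<Rightarrow> nat) \<Rightarrow> bool" where
  "covers n u w \<longleftrightarrow> (\<exists>i j. 1 \<le> i \<and> i < j \<and> j \<le> n \<and> w = u \<circ> transpose i j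
      \<and> inv_count n w = inv_count n u + 1)"

definition w0 :: "nat \<Rightarrow> nat \<Rightarrow> nat" where
  "w0 n k = (if 1 \<le> k \<and> k \<le> n then n + 1 - k else k)"

text \<open>An element of R[S_n] (R a commutative ring, later the polynomial ring
  Q[x_1,...,x_{n-1}]) is a coefficient function on permutations.
  Elements of R (x) E_n act on the right; we represent their action as maps
  on R[S_n].\<close>

type_synonym 'a grp_elt = "(nat \<Rightarrow> nat) \<Rightarrow> 'a"
type_synonym 'a op = "'a grp_elt \<Rightarrow> 'a grp_elt"

definition basis_elt :: "(nat \<Rightarrow> nat) \<Rightarrow> 'a::comm_ring_1 grp_elt" where
  "basis_elt w = (\<lambda>v. if v = w then 1 else 0)"

text \<open>Action of d_{i,j}: w \<odot> d_{i,j} = w t_{i,j} if w t_{i,j} \<lessdot> w, else 0,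
  extended linearly.  The coefficient of v in F \<odot> d_{i,j} is the coefficient
  of w = v t_{i,j} in F, provided v \<lessdot> w.\<close>
definition d_act :: "nat \<Rightarrow> nat \<Rightarrow> nat \<Rightarrow> 'a::comm_ring_1 op" where
  "d_act n i j F = (\<lambda>v. if v permutes {1..n} \<and> covers n v (v \<circ> transpose i j)
                         then F (v \<circ> transpose i j) else 0)"

definition op_add :: "'a::comm_ring_1 op \<Rightarrow> 'a op \<Rightarrow> 'a op" where
  "op_add A B F = (\<lambda>v. A F v + B F v)"

definition op_zero :: "'a::comm_ring_1 op" where
  "op_zero F = (\<lambda>v. 0)"

definition op_neg :: "'a::comm_ring_1 op \<Rightarrow> 'a op" where
  "op_neg A F = (\<lambda>v. - A F v)"

definition op_scal :: "'a::comm_ring_1 \<Rightarrow> 'a op" where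
  "op_scal c F = (\<lambda>v. c * F v)"

definition op_sum :: "'a::comm_ring_1 op list \<Rightarrow> 'a op" where
  "op_sum As = foldr op_add As op_zero"

definition act_prod :: "'a::comm_ring_1 grp_elt \<Rightarrow> 'a op list \<Rightarrow> 'a grp_elt" where
  "act_prod F As = foldl (\<lambda>G A. A G) F As"

definition B_op :: "nat \<Rightarrow> nat \<Rightarrow> nat \<Rightarrow> 'a::comm_ring_1 op" where
  "B_op n i j = op_sum (map (\<lambda>k. d_act n k j) [1..<i+1])"

definition R_factors :: "nat \<Rightarrow> (nat \<Rightarrow> 'a::comm_ring_1) \<Rightarrow> nat \<Rightarrow> 'a op list" where
  "R_factors n x i = map (\<lambda>j. op_add (op_scal (x i)) (B_op n i j)) [i+1..<n+1]"

definition S_BPD :: "nat \<Rightarrow> (nat \<Rightarrow> 'a::comm_ring_1) \<Rightarrow> 'a grp_elt" where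
  "S_BPD n x = act_prod (basis_elt (w0 n)) (concat (map (R_factors n x) [1..<n]))"

definition theta_op :: "nat \<Rightarrow> nat \<Rightarrow> 'a::comm_ring_1 op" where
  "theta_op n i = op_add (op_neg (op_sum (map (\<lambda>j. d_act n j i) [1..<i])))
                         (op_sum (map (\<lambda>j. d_act n i j) [i+1..<n+1]))"

definition dunkl_factor :: "nat \<Rightarrow> (nat \<Rightarrow> 'a::comm_ring_1) \<Rightarrow> nat \<times> nat \<Rightarrow> 'a op" where
  "dunkl_factor n x p = op_add (op_scal (x (fst p))) (op_neg (theta_op n (snd p)))"

type_synonym qpoly = "(nat \<Rightarrow>\<^sub>0 nat) \<Rightarrow>\<^sub>0 rat"

definition Xvar :: "nat \<Rightarrow> qpoly" where
  "Xvar i = Poly_Mapping.single (Poly_Mapping.single i 1) 1"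

end

theory Submission
  imports Defs
begin

(* In the action, d_{a,b} sends w to w t_{a,b} when w covers w t_{a,b}, and for a < b the
   permutation v t_{a,b} covers v iff v a < v b and no position strictly between a and b carries
   a value strictly between v a and v b.  With this description the defining relations of the
   Fomin-Kirillov algebra can be checked on the action, so the Dunkl elements act by commuting
   operators and the factors x_i - theta_j may be collected into rows i = 1, ..., n - 1.

   Row i is applied to an element F supported on permutations that decrease after position i.
   On such F, x - theta_{i+1} acts as x + B_{i,i+1} - d_{i+1,i+2}, and the result decreases after
   position i + 1, so by induction the rest of the row acts as the factors x + B_{i+1,j}.  Since
   d_{i+1,i+2} squares to zero and, on F, turns B_{i,i+1} into B_{i,i+2}, the first of these
   absorbs the correction:
     (x + B_{i,i+1} - d_{i+1,i+2}) (x + B_{i,i+2} + d_{i+1,i+2}) = (x + B_{i,i+1}) (x + B_{i,i+2}).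
   In the remaining factors d_{i+1,j} acts by zero, so B_{i+1,j} may be replaced by B_{i,j}, and
   the row becomes R_i(x_i). *)

section \<open>Covers by a transposition\<close>

definition no_value_between :: "(nat \<Rightarrow> nat) \<Rightarrow> nat \<Rightarrow> nat \<Rightarrow> nat \<Rightarrow> nat \<Rightarrow> bool" where
  "no_value_between w p q lo hi \<longleftrightarrow> (\<forall>k. p < k \<longrightarrow> k < q \<longrightarrow> \<not> (lo < w k \<and> w k < hi))"

definition covered_by_swap :: "(nat \<Rightarrow> nat) \<Rightarrow> nat \<Rightarrow> nat \<Rightarrow> bool" where
  "covered_by_swap w a b \<longleftrightarrow> w a < w b \<and> no_value_between w a b (w a) (w b)"

lemma covered_by_swapD:
  "covered_by_swap v a b \<Longrightarrow> a < k \<Longrightarrow> k < b \<Longrightarrow> \<not> (v a < v k \<and> v k < v b)"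
  unfolding covered_by_swap_def no_value_between_def by blast

lemma no_value_between_cong:
  "(\<And>k. p < k \<Longrightarrow> k < q \<Longrightarrow> w' k = w k)
    \<Longrightarrow> no_value_between w' p q lo hi \<longleftrightarrow> no_value_between w p q lo hi"
  unfolding no_value_between_def by auto

lemma no_value_between_split:
  assumes "p < m" "m < q"
  shows "no_value_between w p q lo hi
           \<longleftrightarrow> no_value_between w p m lo hi \<and> \<not> (lo < w m \<and> w m < hi) \<and> no_value_between w m q lo hi"
proof
  assume "no_value_between w p q lo hi"
  then show "no_value_between w p m lo hi \<and> \<not> (lo < w m \<and> w m < hi) \<and> no_value_between w m q lo hi"
    using assms unfolding no_value_between_def by auto
next
  assume *: "no_value_between w p m lo hi \<and> \<not> (lo < w m \<and> w m < hi) \<and> no_value_between w m q lo hi"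
  show "no_value_between w p q lo hi"
    unfolding no_value_between_def
  proof (intro allI impI)
    fix k assume "p < k" "k < q"
    then consider "k < m" | "k = m" | "m < k" by linarith
    then show "\<not> (lo < w k \<and> w k < hi)"
      using * \<open>p < k\<close> \<open>k < q\<close> unfolding no_value_between_def by cases auto
  qed
qed

lemma no_value_between_merge:
  assumes "lo < mid" "mid < hi" "\<And>k. p < k \<Longrightarrow> k < q \<Longrightarrow> w k \<noteq> mid"
  shows "no_value_between w p q lo mid \<and> no_value_between w p q mid hi \<longleftrightarrow> no_value_between w p q lo hi"
proof
  assume *: "no_value_between w p q lo mid \<and> no_value_between w p q mid hi"
  show "no_value_between w p q lo hi"
    unfolding no_value_between_def
  proof (intro allI impI)
    fix k assume k: "p < k" "k < q"
    then have "w k < mid \<or> mid < w k" using assms(3) by fastforce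
    then show "\<not> (lo < w k \<and> w k < hi)" using * k unfolding no_value_between_def by auto
  qed
next
  assume "no_value_between w p q lo hi"
  then show "no_value_between w p q lo mid \<and> no_value_between w p q mid hi"
    using assms(1,2) unfolding no_value_between_def by auto
qed

lemma no_value_between_Suc [simp]: "no_value_between w c (Suc c) lo hi"
  unfolding no_value_between_def by auto

lemma no_value_between_comp_transpose_inside:
  assumes "p < a" "a < q" "p < b" "b < q"
  shows "no_value_between (w \<circ> transpose a b) p q lo hi \<longleftrightarrow> no_value_between w p q lo hi"
proof -
  have "no_value_between v p q lo hi \<longleftrightarrow> (\<forall>m\<in>v ` {p<..<q}. \<not> (lo < m \<and> m < hi))" for v
    unfolding no_value_between_def by auto
  moreover have "transpose a b ` {p<..<q} = {p<..<q}"
    using assms by (intro transpose_image_eq) auto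
  then have "(w \<circ> transpose a b) ` {p<..<q} = w ` {p<..<q}"
    by (metis image_comp)
  ultimately show ?thesis by (simp only:)
qed

lemma covered_by_swap_cong:
  assumes "\<And>k. p < k \<Longrightarrow> k < q \<Longrightarrow> u k = w k"
  shows "covered_by_swap u p q \<longleftrightarrow> u p < u q \<and> no_value_between w p q (u p) (u q)"
  unfolding covered_by_swap_def using no_value_between_cong[OF assms] by simp

lemma covered_by_swap_through_middle:
  assumes "x < y" "y < z" "\<And>k. x < k \<Longrightarrow> k < z \<Longrightarrow> k \<noteq> y \<Longrightarrow> u k = w k"
  shows "covered_by_swap u x z \<longleftrightarrow> u x < u z \<and> no_value_between w x y (u x) (u z)
           \<and> \<not> (u x < u y \<and> u y < u z) \<and> no_value_between w y z (u x) (u z)"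
proof -
  have "no_value_between u x y (u x) (u z) \<longleftrightarrow> no_value_between w x y (u x) (u z)"
    "no_value_between u y z (u x) (u z) \<longleftrightarrow> no_value_between w y z (u x) (u z)"
    using assms by (auto intro!: no_value_between_cong)
  then show ?thesis
    unfolding covered_by_swap_def using no_value_between_split[OF assms(1,2)] by simp
qed

lemma double_sum_split:
  fixes G :: "'b \<Rightarrow> 'b \<Rightarrow> 'c::comm_monoid_add"
  assumes "finite U" "S \<subseteq> U"
  shows "(\<Sum>p\<in>U. \<Sum>q\<in>U. G p q) = (\<Sum>p\<in>S. \<Sum>q\<in>S. G p q)
           + (\<Sum>k\<in>U - S. \<Sum>s\<in>S. G s k + G k s) + (\<Sum>p\<in>U - S. \<Sum>q\<in>U - S. G p q)"
proof -
  have split: "sum f U = sum f S + sum f (U - S)" for f :: "'b \<Rightarrow> 'c"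
    using assms by (metis add.commute sum.subset_diff)
  show ?thesis
    unfolding split[of "\<lambda>p. \<Sum>q\<in>U. G p q"] split
    by (simp add: sum.distrib sum.swap[of _ S "U - S"] algebra_simps)
qed

lemma inv_count_eq_sum:
  "int (inv_count n w) = (\<Sum>p\<in>{1..n}. \<Sum>q\<in>{1..n}. of_bool (p < q \<and> w q < w p))"
proof -
  have "{(i, j). 1 \<le> i \<and> i < j \<and> j \<le> n \<and> w i > w j}
      = ({1..n} \<times> {1..n}) \<inter> {x. fst x < snd x \<and> w (snd x) < w (fst x)}"
    by auto
  then have "int (inv_count n w)
      = (\<Sum>x\<in>{1..n} \<times> {1..n}. of_bool (fst x < snd x \<and> w (snd x) < w (fst x)))"
    unfolding inv_count_def by (simp only: sum_of_bool_eq finite_cartesian_product finite_atLeastAtMost)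
  also have "\<dots> = (\<Sum>(p, q)\<in>{1..n} \<times> {1..n}. of_bool (p < q \<and> w q < w p))"
    by (simp add: case_prod_beta')
  finally show ?thesis by (simp only: sum.cartesian_product)
qed

lemma inv_count_comp_transpose_eq_sum:
  assumes "a \<in> {1..n}" "b \<in> {1..n}"
  shows "int (inv_count n (w \<circ> transpose a b))
           = (\<Sum>p\<in>{1..n}. \<Sum>q\<in>{1..n}. of_bool (transpose a b p < transpose a b q \<and> w q < w p))"
proof -
  have "transpose a b p \<in> {1..n} \<longleftrightarrow> p \<in> {1..n}" for p
    using assms by (auto simp: transpose_def)
  then show ?thesis
    unfolding inv_count_eq_sum comp_def
    by (intro sum.reindex_bij_witness[of _ "transpose a b" "transpose a b"] sum.cong) auto
qed

lemma inv_count_comp_transpose: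
  assumes w: "w permutes {1..n}" and ab: "1 \<le> a" "a < b" "b \<le> n" and lt: "w a < w b"
  shows "int (inv_count n (w \<circ> transpose a b)) = int (inv_count n w) + 1
           + 2 * int (card {k. a < k \<and> k < b \<and> w a < w k \<and> w k < w b})"
proof -
  define U where "U = {1..n}"
  define t where "t = transpose a b"
  define G where "G p q = (of_bool (t p < t q \<and> w q < w p) - of_bool (p < q \<and> w q < w p) :: int)"
    for p q
  have "{a, b} \<subseteq> U" using ab by (auto simp: U_def)
  have diff: "int (inv_count n (w \<circ> t)) - int (inv_count n w) = (\<Sum>p\<in>U. \<Sum>q\<in>U. G p q)"
    using inv_count_comp_transpose_eq_sum[of a n b w] \<open>{a, b} \<subseteq> U\<close>
    unfolding inv_count_eq_sum U_def G_def t_def by (simp add: sum_subtractf)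
  \<comment> \<open>Only pairs meeting \<open>{a, b}\<close> change status: \<open>(a, b)\<close> itself contributes 1, and every
    \<open>k\<close> between \<open>a\<close> and \<open>b\<close> with \<open>w k\<close> between \<open>w a\<close> and \<open>w b\<close> contributes 2.\<close>
  note parts = double_sum_split[OF _ \<open>{a, b} \<subseteq> U\<close>, of G]
  have corner: "(\<Sum>p\<in>{a, b}. \<Sum>q\<in>{a, b}. G p q) = 1"
    using ab lt by (simp add: G_def t_def)
  have edge: "(\<Sum>s\<in>{a, b}. G s k + G k s) = 2 * of_bool (a < k \<and> k < b \<and> w a < w k \<and> w k < w b)"
    if k: "k \<in> U - {a, b}" for k
  proof -
    have "w k \<noteq> w a" "w k \<noteq> w b"
      using k permutes_inj[OF w] by (auto dest: injD)
    then show ?thesis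
      using k ab lt unfolding G_def t_def
      by (cases "k < a"; cases "k < b"; cases "w k < w a"; cases "w k < w b")
         (auto simp: transpose_def)
  qed
  have inner: "(\<Sum>p\<in>U - {a, b}. \<Sum>q\<in>U - {a, b}. G p q) = 0"
    by (simp add: G_def t_def)
  have "(\<Sum>k\<in>U - {a, b}. \<Sum>s\<in>{a, b}. G s k + G k s)
      = (\<Sum>k\<in>U - {a, b}. 2 * of_bool (a < k \<and> k < b \<and> w a < w k \<and> w k < w b))"
    by (rule sum.cong[OF refl edge])
  also have "\<dots> = 2 * int (card ((U - {a, b}) \<inter> {k. a < k \<and> k < b \<and> w a < w k \<and> w k < w b}))"
    by (simp add: sum_distrib_left[symmetric] U_def)
  also have "(U - {a, b}) \<inter> {k. a < k \<and> k < b \<and> w a < w k \<and> w k < w b}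
      = {k. a < k \<and> k < b \<and> w a < w k \<and> w k < w b}"
    using ab by (auto simp: U_def)
  finally show ?thesis
    using diff parts corner inner by (simp add: t_def U_def)
qed

lemma covers_comp_transpose_iff_inv_count:
  assumes "1 \<le> a" "a < b" "b \<le> n"
  shows "covers n w (w \<circ> transpose a b) \<longleftrightarrow> inv_count n (w \<circ> transpose a b) = inv_count n w + 1"
  using assms unfolding covers_def by blast

lemma covers_comp_transpose_iff:
  assumes w: "w permutes {1..n}" and ab: "1 \<le> a" "a < b" "b \<le> n"
  shows "covers n w (w \<circ> transpose a b) \<longleftrightarrow> covered_by_swap w a b"
proof (cases "w a < w b")
  case True
  define K where "K = {k. a < k \<and> k < b \<and> w a < w k \<and> w k < w b}"
  have "finite K" unfolding K_def by (rule finite_subset[of _ "{a<..<b}"]) auto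
  then have "card K = 0 \<longleftrightarrow> no_value_between w a b (w a) (w b)"
    unfolding K_def no_value_between_def by auto
  moreover have "int (inv_count n (w \<circ> transpose a b)) = int (inv_count n w) + 1 + 2 * int (card K)"
    unfolding K_def by (rule inv_count_comp_transpose[OF w ab True])
  then have "inv_count n (w \<circ> transpose a b) = inv_count n w + 1 \<longleftrightarrow> card K = 0"
    by linarith
  ultimately show ?thesis
    using True by (simp add: covers_comp_transpose_iff_inv_count[OF ab] covered_by_swap_def)
next
  case False
  define u where "u = w \<circ> transpose a b"
  have u: "u permutes {1..n}"
    unfolding u_def using ab by (intro permutes_compose[OF _ w] permutes_swap_id) auto
  have "w a \<noteq> w b" using permutes_inj[OF w] ab by (auto dest: injD)
  then have "u a < u b" using False by (simp add: u_def)
  moreover have "u \<circ> transpose a b = w"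
    unfolding u_def by (rule ext) simp
  ultimately have "inv_count n w > inv_count n u"
    using inv_count_comp_transpose[OF u ab] by fastforce
  then show ?thesis
    using False by (simp add: covers_comp_transpose_iff_inv_count[OF ab] covered_by_swap_def u_def)
qed

section \<open>The action on Q[S_n]\<close>

lemma op_add_apply [simp]: "op_add A B F v = A F v + B F v"
  by (simp add: op_add_def)

lemma op_neg_apply [simp]: "op_neg A F v = - A F v"
  by (simp add: op_neg_def)

lemma op_scal_apply [simp]: "op_scal c F v = c * F v"
  by (simp add: op_scal_def)

lemma op_zero_apply [simp]: "op_zero F v = 0"
  by (simp add: op_zero_def)

lemma op_sum_apply: "op_sum As F v = (\<Sum>A\<leftarrow>As. A F v)"
  by (induction As) (auto simp: op_sum_def)

lemma act_prod_Nil [simp]: "act_prod F [] = F"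
  by (simp add: act_prod_def)

lemma act_prod_Cons [simp]: "act_prod F (A # As) = act_prod (A F) As"
  by (simp add: act_prod_def)

lemma act_prod_append: "act_prod F (As @ Bs) = act_prod (act_prod F As) Bs"
  by (simp add: act_prod_def)

lemma B_op_apply: "B_op n i j F v = (\<Sum>k=1..i. d_act n k j F v)"
proof -
  have "B_op n i j F v = (\<Sum>k\<leftarrow>[1..<i+1]. d_act n k j F v)"
    unfolding B_op_def op_sum_apply by (simp add: comp_def)
  also have "\<dots> = (\<Sum>k\<in>set [1..<i+1]. d_act n k j F v)"
    by (rule interv_sum_list_conv_sum_set_nat)
  also have "set [1..<i+1] = {1..i}" by auto
  finally show ?thesis .
qed

lemma B_op_Suc: "B_op n (Suc i) j F v = B_op n i j F v + d_act n (Suc i) j F v"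
  by (simp add: B_op_apply)

lemma theta_op_apply:
  "theta_op n i F v = - (\<Sum>j\<in>{1..<i}. d_act n j i F v) + (\<Sum>j\<in>{i<..n}. d_act n i j F v)"
proof -
  have "(\<Sum>j\<leftarrow>[1..<i]. d_act n j i F v) = (\<Sum>j\<in>{1..<i}. d_act n j i F v)"
    by (simp only: interv_sum_list_conv_sum_set_nat set_upt)
  moreover have "(\<Sum>j\<leftarrow>[i+1..<n+1]. d_act n i j F v) = (\<Sum>j\<in>{i<..n}. d_act n i j F v)"
  proof -
    have "set [i+1..<n+1] = {i<..n}" by auto
    then show ?thesis by (simp only: interv_sum_list_conv_sum_set_nat)
  qed
  ultimately show ?thesis
    unfolding theta_op_def op_add_apply op_neg_apply op_sum_apply by (simp add: comp_def)
qed

lemma permutes_comp_transpose: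
  "v permutes S \<Longrightarrow> a \<in> S \<Longrightarrow> b \<in> S \<Longrightarrow> v \<circ> transpose a b permutes S"
  by (rule permutes_compose[OF permutes_swap_id])

lemma d_act_eq:
  assumes "1 \<le> a" "a < b" "b \<le> n"
  shows "d_act n a b F v
           = (if v permutes {1..n} \<and> covered_by_swap v a b then F (v \<circ> transpose a b) else 0)"
  unfolding d_act_def using covers_comp_transpose_iff[OF _ assms] by auto

lemma d_act_nonzero:
  assumes "d_act n a b F v \<noteq> 0" "1 \<le> a" "a < b" "b \<le> n"
  shows "v permutes {1..n}" "covered_by_swap v a b" "F (v \<circ> transpose a b) \<noteq> 0"
  using assms by (auto simp: d_act_eq split: if_splits)

lemma d_act_d_act:
  assumes "1 \<le> a" "a < b" "b \<le> n" "1 \<le> c" "c < d" "d \<le> n"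
  shows "d_act n c d (d_act n a b F) w
           = (if w permutes {1..n} \<and> covered_by_swap w c d \<and> covered_by_swap (w \<circ> transpose c d) a b
              then F (w \<circ> transpose c d \<circ> transpose a b) else 0)"
proof (cases "w permutes {1..n}")
  case True
  then have "w \<circ> transpose c d permutes {1..n}"
    using assms by (intro permutes_comp_transpose) auto
  then show ?thesis using assms by (simp add: d_act_eq)
qed (use assms in \<open>simp add: d_act_eq\<close>)

lemma d_act_square_zero: "d_act n a b (d_act n a b F) w = 0"
proof -
  have "\<not> (covers n w (w \<circ> transpose a b)
           \<and> covers n (w \<circ> transpose a b) (w \<circ> transpose a b \<circ> transpose a b))"
    by (auto simp: comp_assoc covers_def)
  then show ?thesis unfolding d_act_def by auto
qed

lemma d_act_linear: "d_act n a b (\<lambda>v. s * F v + G v) w = s * d_act n a b F w + d_act n a b G w"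
  by (simp add: d_act_def)

lemma d_act_scale: "d_act n a b (\<lambda>v. s * F v) w = s * d_act n a b F w"
  by (simp add: d_act_def)

lemma d_act_diff: "d_act n a b (\<lambda>v. F v - G v) w = d_act n a b F w - d_act n a b G w"
  by (simp add: d_act_def)

lemma d_act_uminus: "d_act n a b (\<lambda>v. - F v) w = - d_act n a b F w"
  by (simp add: d_act_def)

lemma d_act_sum: "d_act n a b (\<lambda>v. \<Sum>k\<in>K. G k v) w = (\<Sum>k\<in>K. d_act n a b (G k) w)"
  unfolding d_act_def by (cases "w permutes {1..n}"; cases "covers n w (w \<circ> transpose a b)") simp_all

lemma B_op_linear: "B_op n i j (\<lambda>v. s * F v + G v) w = s * B_op n i j F w + B_op n i j G w"
  by (simp add: B_op_apply d_act_linear sum.distrib sum_distrib_left)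

lemma B_op_diff: "B_op n i j (\<lambda>v. F v - G v) w = B_op n i j F w - B_op n i j G w"
  by (simp add: B_op_apply d_act_diff sum_subtractf)

lemma theta_op_scale_diff:
  "theta_op n i (\<lambda>v. r * G v - H v) w = r * theta_op n i G w - theta_op n i H w"
  by (simp add: theta_op_apply d_act_diff d_act_scale sum_subtractf sum_distrib_left algebra_simps)

definition supported_on :: "nat \<Rightarrow> ((nat \<Rightarrow> nat) \<Rightarrow> bool) \<Rightarrow> 'a::comm_ring_1 grp_elt \<Rightarrow> bool" where
  "supported_on n P F \<longleftrightarrow> (\<forall>v. F v \<noteq> 0 \<longrightarrow> v permutes {1..n} \<and> P v)"

lemma supported_on_mono:
  "supported_on n P F \<Longrightarrow> (\<And>v. v permutes {1..n} \<Longrightarrow> P v \<Longrightarrow> Q v) \<Longrightarrow> supported_on n Q F"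
  unfolding supported_on_def by blast

lemma supported_on_add:
  "supported_on n P F \<Longrightarrow> supported_on n P G \<Longrightarrow> supported_on n P (\<lambda>v. F v + G v)"
  unfolding supported_on_def by (metis add.right_neutral)

lemma supported_on_diff:
  "supported_on n P F \<Longrightarrow> supported_on n P G \<Longrightarrow> supported_on n P (\<lambda>v. F v - G v)"
  unfolding supported_on_def by (metis diff_self)

lemma supported_on_scale: "supported_on n P F \<Longrightarrow> supported_on n P (\<lambda>v. s * F v)"
  unfolding supported_on_def by (metis mult_zero_right)

lemma supported_on_sum:
  "(\<And>k. k \<in> K \<Longrightarrow> supported_on n P (G k)) \<Longrightarrow> supported_on n P (\<lambda>v. \<Sum>k\<in>K. G k v)"
  unfolding supported_on_def by (metis sum.not_neutral_contains_not_neutral)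

lemma supported_on_d_act:
  assumes F: "supported_on n P F" and ab: "1 \<le> a" "a < b" "b \<le> n"
    and PQ: "\<And>v. v permutes {1..n} \<Longrightarrow> covered_by_swap v a b \<Longrightarrow> P (v \<circ> transpose a b) \<Longrightarrow> Q v"
  shows "supported_on n Q (d_act n a b F)"
  using F PQ unfolding supported_on_def d_act_eq[OF ab] by auto

lemma supported_on_B_op:
  assumes F: "supported_on n P F" and "i < j" "j \<le> n"
    and PQ: "\<And>v k. 1 \<le> k \<Longrightarrow> k \<le> i \<Longrightarrow> v permutes {1..n} \<Longrightarrow> covered_by_swap v k j
              \<Longrightarrow> P (v \<circ> transpose k j) \<Longrightarrow> Q v"
  shows "supported_on n Q (B_op n i j F)"
proof -
  have "supported_on n Q (d_act n k j F)" if "k \<in> {1..i}" for k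
    using that assms by (intro supported_on_d_act[OF F]) auto
  moreover have "B_op n i j F = (\<lambda>v. \<Sum>k\<in>{1..i}. d_act n k j F v)"
    by (simp add: fun_eq_iff B_op_apply)
  ultimately show ?thesis
    using supported_on_sum[of "{1..i}" n Q "\<lambda>k. d_act n k j F"] by simp
qed

section \<open>A row of Dunkl factors\<close>

definition dunkl_op :: "nat \<Rightarrow> 'a::comm_ring_1 \<Rightarrow> nat \<Rightarrow> 'a op" where
  "dunkl_op n s j = op_add (op_scal s) (op_neg (theta_op n j))"

definition bpd_op :: "nat \<Rightarrow> 'a::comm_ring_1 \<Rightarrow> nat \<Rightarrow> nat \<Rightarrow> 'a op" where
  "bpd_op n s i j = op_add (op_scal s) (B_op n i j)"

lemma dunkl_op_apply: "dunkl_op n s j F v = s * F v - theta_op n j F v"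
  by (simp add: dunkl_op_def)

lemma bpd_op_apply: "bpd_op n s i j F v = s * F v + B_op n i j F v"
  by (simp add: bpd_op_def)

lemma R_factors_eq: "R_factors n x i = map (bpd_op n (x i) i) [Suc i..<Suc n]"
  by (simp add: R_factors_def bpd_op_def)

lemma dunkl_op_last: "dunkl_op (Suc i) s (Suc i) = bpd_op (Suc i) s i (Suc i)"
proof (intro ext)
  fix F :: "'a grp_elt" and v
  have "{1..<Suc i} = {1..i}" by auto
  then show "dunkl_op (Suc i) s (Suc i) F v = bpd_op (Suc i) s i (Suc i) F v"
    by (simp add: dunkl_op_apply bpd_op_apply theta_op_apply B_op_apply)
qed

lemma supported_on_bpd_op:
  assumes "supported_on n P H" "i < j" "j \<le> n"
    and "\<And>v k. 1 \<le> k \<Longrightarrow> k \<le> i \<Longrightarrow> v permutes {1..n} \<Longrightarrow> covered_by_swap v k j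
              \<Longrightarrow> P (v \<circ> transpose k j) \<Longrightarrow> Q v"
    and "\<And>v. v permutes {1..n} \<Longrightarrow> P v \<Longrightarrow> Q v"
  shows "supported_on n Q (bpd_op n s i j H)"
proof -
  have "supported_on n Q H" "supported_on n Q (B_op n i j H)"
    using assms by (blast intro: supported_on_mono, intro supported_on_B_op)
  then have "supported_on n Q (\<lambda>v. s * H v + B_op n i j H v)"
    by (intro supported_on_add supported_on_scale)
  then show ?thesis by (simp add: bpd_op_apply[abs_def])
qed

definition decreasing_after :: "nat \<Rightarrow> nat \<Rightarrow> (nat \<Rightarrow> nat) \<Rightarrow> bool" where
  "decreasing_after n i v \<longleftrightarrow> (\<forall>p q. i < p \<longrightarrow> p < q \<longrightarrow> q \<le> n \<longrightarrow> v q < v p)"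

lemma decreasing_after_mono: "decreasing_after n i v \<Longrightarrow> i \<le> i' \<Longrightarrow> decreasing_after n i' v"
  unfolding decreasing_after_def by auto

lemma decreasing_after_swap:
  assumes v: "inj v" "covered_by_swap v k j" and kj: "k < m" "m \<le> j"
    and u: "decreasing_after n m (v \<circ> transpose k j)"
  shows "decreasing_after n m v"
  unfolding decreasing_after_def
proof (intro allI impI)
  fix p q assume pq: "m < p" "p < q" "q \<le> n"
  have u_pq: "(v \<circ> transpose k j) q < (v \<circ> transpose k j) p"
    using u pq unfolding decreasing_after_def by blast
  have "p \<noteq> k" "q \<noteq> k" using pq kj by auto
  consider "q = j" | "p = j" | "p \<noteq> j" "q \<noteq> j" by blast
  then show "v q < v p"
  proof cases
    case 1
    have "p \<noteq> j" using 1 pq by simp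
    then have "v p \<noteq> v j" using injD[OF v(1)] by blast
    moreover have "v k < v p" using u_pq 1 \<open>p \<noteq> k\<close> \<open>p \<noteq> j\<close> by simp
    moreover have "k < p" "p < j" using pq kj 1 by simp_all
    ultimately have "v j < v p" using covered_by_swapD[OF v(2), of p] by auto
    then show ?thesis using 1 by simp
  next
    case 2
    then have "v q < v k" using u_pq \<open>q \<noteq> k\<close> pq by simp
    then show ?thesis using v(2) 2 by (simp add: covered_by_swap_def)
  next
    case 3
    then show ?thesis using u_pq \<open>p \<noteq> k\<close> \<open>q \<noteq> k\<close> by simp
  qed
qed

lemma decreasing_after_adjacent_swap:
  assumes u: "decreasing_after n i (v \<circ> transpose (Suc i) (Suc (Suc i)))"
  shows "decreasing_after n (Suc i) v"
  unfolding decreasing_after_def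
proof (intro allI impI)
  fix p q assume pq: "Suc i < p" "p < q" "q \<le> n"
  have dec: "\<And>p q. i < p \<Longrightarrow> p < q \<Longrightarrow> q \<le> n
      \<Longrightarrow> (v \<circ> transpose (Suc i) (Suc (Suc i))) q < (v \<circ> transpose (Suc i) (Suc (Suc i))) p"
    using u unfolding decreasing_after_def by blast
  show "v q < v p"
  proof (cases "p = Suc (Suc i)")
    case True
    then show ?thesis using dec[of "Suc i" q] pq by simp
  next
    case False
    then show ?thesis using dec[of p q] pq by simp
  qed
qed

lemma supported_on_bpd_op_decreasing:
  assumes "supported_on n (decreasing_after n (Suc i)) H" "Suc i \<le> j" "j \<le> n"
  shows "supported_on n (decreasing_after n (Suc i)) (bpd_op n s i j H)"
proof (rule supported_on_bpd_op[OF assms(1)])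
  fix v k assume k: "k \<le> i" and v: "v permutes {1..n}" "covered_by_swap v k j"
    "decreasing_after n (Suc i) (v \<circ> transpose k j)"
  show "decreasing_after n (Suc i) v"
    by (rule decreasing_after_swap[OF permutes_inj[OF v(1)] v(2) _ assms(2) v(3)]) (use k in simp)
qed (use assms in auto)

lemma supported_on_bpd_row:
  assumes "supported_on n (decreasing_after n (Suc i)) H" "\<forall>j\<in>set js. Suc i \<le> j \<and> j \<le> n"
  shows "supported_on n (decreasing_after n (Suc i)) (act_prod H (map (bpd_op n s i) js))"
  using assms
proof (induction js arbitrary: H)
  case (Cons j js)
  then show ?case using supported_on_bpd_op_decreasing[OF Cons.prems(1)] by simp
qed simp

lemma d_act_eq_0_if_decreasing:
  assumes F: "supported_on n (decreasing_after n i) F" and b: "Suc (Suc i) < b" "b \<le> n"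
  shows "d_act n (Suc i) b F v = 0"
proof (rule ccontr)
  assume "d_act n (Suc i) b F v \<noteq> 0"
  moreover have "1 \<le> Suc i" "Suc i < b" using b by auto
  ultimately have nz: "v permutes {1..n}" "covered_by_swap v (Suc i) b"
      "F (v \<circ> transpose (Suc i) b) \<noteq> 0"
    using d_act_nonzero b by blast+
  have "decreasing_after n i (v \<circ> transpose (Suc i) b)"
    using F nz(3) unfolding supported_on_def by blast
  then have dec: "\<And>p q. i < p \<Longrightarrow> p < q \<Longrightarrow> q \<le> n
      \<Longrightarrow> (v \<circ> transpose (Suc i) b) q < (v \<circ> transpose (Suc i) b) p"
    unfolding decreasing_after_def by blast
  have "v (Suc i) < v (Suc (Suc i))"
    using dec[of "Suc (Suc i)" b] b by simp
  moreover have "v (Suc (Suc i)) < v b"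
    using dec[of "Suc i" "Suc (Suc i)"] b by simp
  ultimately show False using covered_by_swapD[OF nz(2), of "Suc (Suc i)"] b by auto
qed

lemma dunkl_op_eq_if_decreasing:
  assumes F: "supported_on n (decreasing_after n i) F" and i: "Suc i < n"
  shows "dunkl_op n s (Suc i) F v
           = s * F v + B_op n i (Suc i) F v - d_act n (Suc i) (Suc (Suc i)) F v"
proof -
  have "{Suc i<..n} = insert (Suc (Suc i)) {Suc (Suc i)<..n}" using i by auto
  moreover have "(\<Sum>j\<in>{Suc (Suc i)<..n}. d_act n (Suc i) j F v) = 0"
    by (rule sum.neutral) (simp add: d_act_eq_0_if_decreasing[OF F])
  ultimately show ?thesis
    by (simp add: dunkl_op_apply theta_op_apply B_op_apply atLeastLessThanSuc_atLeastAtMost)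
qed

lemma supported_on_dunkl_op:
  assumes F: "supported_on n (decreasing_after n i) F" and i: "Suc i < n"
  shows "supported_on n (decreasing_after n (Suc i)) (dunkl_op n s (Suc i) F)"
proof -
  have F': "supported_on n (decreasing_after n (Suc i)) F"
    using F by (rule supported_on_mono) (simp add: decreasing_after_mono)
  have B: "supported_on n (decreasing_after n (Suc i)) (B_op n i (Suc i) F)"
  proof (rule supported_on_B_op[OF F])
    fix v k assume k: "1 \<le> k" "k \<le> i" and v: "v permutes {1..n}" "covered_by_swap v k (Suc i)"
      "decreasing_after n i (v \<circ> transpose k (Suc i))"
    have "decreasing_after n (Suc i) (v \<circ> transpose k (Suc i))"
      using v(3) by (simp add: decreasing_after_mono)
    with k show "decreasing_after n (Suc i) v"
      by (intro decreasing_after_swap[OF permutes_inj[OF v(1)] v(2) _ order.refl]) simp_all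
  qed (use i in simp_all)
  have D: "supported_on n (decreasing_after n (Suc i)) (d_act n (Suc i) (Suc (Suc i)) F)"
    by (rule supported_on_d_act[OF F]) (use i in \<open>simp_all add: decreasing_after_adjacent_swap\<close>)
  have "supported_on n (decreasing_after n (Suc i))
      (\<lambda>v. s * F v + B_op n i (Suc i) F v - d_act n (Suc i) (Suc (Suc i)) F v)"
    by (intro supported_on_diff[OF supported_on_add[OF supported_on_scale[OF F'] B] D])
  then show ?thesis
    by (simp add: dunkl_op_eq_if_decreasing[OF F i] supported_on_def)
qed

lemma d_act_adjacent_commute:
  assumes a: "1 \<le> a" "a < c" "Suc c \<le> n" and F: "supported_on n (\<lambda>u. u (Suc c) < u c) F"
  shows "d_act n c (Suc c) (d_act n a c F) w = d_act n a (Suc c) (d_act n c (Suc c) F) w"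
proof -
  define \<sigma> where "\<sigma> = w \<circ> transpose c (Suc c) \<circ> transpose a c"
  have \<sigma>': "w \<circ> transpose a (Suc c) \<circ> transpose c (Suc c) = \<sigma>"
    using a by (auto simp: fun_eq_iff \<sigma>_def transpose_def)
  have "covered_by_swap w c (Suc c) \<and> covered_by_swap (w \<circ> transpose c (Suc c)) a c
      \<longleftrightarrow> covered_by_swap w a (Suc c) \<and> covered_by_swap (w \<circ> transpose a (Suc c)) c (Suc c)"
    if "F \<sigma> \<noteq> 0"
  proof -
    have "\<sigma> (Suc c) < \<sigma> c" using F that unfolding supported_on_def by blast
    then have ca: "w c < w a" using a by (simp add: \<sigma>_def)
    have "no_value_between (w \<circ> transpose c (Suc c)) a c (w a) (w (Suc c))
        \<longleftrightarrow> no_value_between w a c (w a) (w (Suc c))"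
      by (rule no_value_between_cong) simp
    moreover have "no_value_between w a (Suc c) (w a) (w (Suc c))
        \<longleftrightarrow> no_value_between w a c (w a) (w (Suc c))"
      using no_value_between_split[of a c "Suc c" w] a ca
      by (simp add: no_value_between_def)
    ultimately show ?thesis
      using a ca by (auto simp: covered_by_swap_def)
  qed
  then show ?thesis
    using a by (auto simp: d_act_d_act \<sigma>' \<sigma>_def[symmetric])
qed

lemma bpd_op_dunkl_op_exchange:
  fixes F :: "'a::comm_ring_1 grp_elt"
  assumes F: "supported_on n (decreasing_after n i) F" and i: "Suc i < n"
  shows "bpd_op n s (Suc i) (Suc (Suc i)) (dunkl_op n s (Suc i) F)
           = bpd_op n s i (Suc (Suc i)) (bpd_op n s i (Suc i) F)"
proof (rule ext)
  fix w
  define D :: "'a op" where "D = d_act n (Suc i) (Suc (Suc i))"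
  define B :: "'a op" where "B = B_op n i (Suc i)"
  define B' :: "'a op" where "B' = B_op n i (Suc (Suc i))"
  define G where "G = dunkl_op n s (Suc i) F"
  have G_eq: "G = (\<lambda>v. s * F v + B F v - D F v)"
    unfolding G_def D_def B_def using dunkl_op_eq_if_decreasing[OF F i] by (simp add: fun_eq_iff)
  have "supported_on n (\<lambda>u. u (Suc (Suc i)) < u (Suc i)) F"
    by (rule supported_on_mono[OF F]) (use i in \<open>simp add: decreasing_after_def\<close>)
  then have DB: "D (B F) w = B' (D F) w"
    unfolding B_def B'_def D_def B_op_apply[abs_def] d_act_sum
    by (intro sum.cong refl d_act_adjacent_commute) (use i in auto)
  have DD: "D (D F) w = 0"
    unfolding D_def by (rule d_act_square_zero)
  have "bpd_op n s (Suc i) (Suc (Suc i)) G w = s * G w + B' G w + D G w"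
    by (simp add: bpd_op_apply B_op_Suc B'_def D_def)
  also have "\<dots> = s * (s * F w + B F w - D F w) + (s * B' F w + B' (B F) w - B' (D F) w)
      + (s * D F w + D (B F) w - D (D F) w)"
    unfolding G_eq B'_def D_def by (simp only: B_op_linear B_op_diff d_act_linear d_act_diff)
  also have "\<dots> = s * (s * F w + B F w) + (s * B' F w + B' (B F) w)"
    using DB DD by (simp add: algebra_simps)
  also have "\<dots> = bpd_op n s i (Suc (Suc i)) (bpd_op n s i (Suc i) F) w"
    unfolding bpd_op_apply[abs_def] B_def B'_def by (simp only: B_op_linear)
  finally show "bpd_op n s (Suc i) (Suc (Suc i)) (dunkl_op n s (Suc i) F) w
      = bpd_op n s i (Suc (Suc i)) (bpd_op n s i (Suc i) F) w"
    by (simp add: G_def)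
qed

definition tail_below :: "nat \<Rightarrow> nat \<Rightarrow> nat \<Rightarrow> (nat \<Rightarrow> nat) \<Rightarrow> bool" where
  "tail_below n c q v \<longleftrightarrow> v (Suc c) < v c \<and> (\<forall>k. q < k \<longrightarrow> k \<le> n \<longrightarrow> v k < v (Suc c))"

lemma tail_below_mono: "tail_below n c q v \<Longrightarrow> q \<le> q' \<Longrightarrow> tail_below n c q' v"
  unfolding tail_below_def by auto

lemma tail_below_swap:
  assumes v: "inj v" "covered_by_swap v k j" and kc: "k < c" "c \<le> j" "j \<le> Suc q" "Suc c \<le> q"
    and u: "tail_below n c q (v \<circ> transpose k j)"
  shows "tail_below n c (max q j) v"
proof -
  define u where "u = v \<circ> transpose k j"
  have u1: "u (Suc c) < u c" and u2: "\<And>p. q < p \<Longrightarrow> p \<le> n \<Longrightarrow> u p < u (Suc c)"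
    using u unfolding tail_below_def u_def by blast+
  have vkj: "v k < v j" using v(2) by (simp add: covered_by_swap_def)
  have tail: "u p = v p" if "max q j < p" for p
    using that kc by (simp add: u_def)
  have Sc: "u (Suc c) \<le> v (Suc c)"
    using vkj kc by (cases "j = Suc c") (simp_all add: u_def)
  have desc: "v (Suc c) < v c"
  proof -
    consider "j = c" | "j = Suc c" | "Suc c < j" using kc by linarith
    then show ?thesis
    proof cases
      case 1
      then show ?thesis using u1 vkj kc by (simp add: u_def)
    next
      case 2
      then have "v k < v c" "\<not> (v k < v c \<and> v c < v (Suc c))"
        using u1 kc covered_by_swapD[OF v(2), of c] by (simp_all add: u_def)
      moreover have "v c \<noteq> v (Suc c)" using injD[OF v(1), of c "Suc c"] by auto
      ultimately show ?thesis by linarith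
    next
      case 3
      then show ?thesis using u1 kc by (simp add: u_def)
    qed
  qed
  show ?thesis
    unfolding tail_below_def using desc u2 tail Sc by fastforce
qed

lemma supported_on_bpd_op_tail:
  assumes H: "supported_on n (tail_below n (Suc i) q) H"
    and j: "Suc (Suc i) \<le> q" "Suc i \<le> j" "j \<le> Suc q" "j \<le> n"
  shows "supported_on n (tail_below n (Suc i) (max q j)) (bpd_op n s i j H)"
proof (rule supported_on_bpd_op[OF H])
  fix v k assume k: "k \<le> i" and v: "v permutes {1..n}" "covered_by_swap v k j"
    "tail_below n (Suc i) q (v \<circ> transpose k j)"
  have "k < Suc i" using k by simp
  then show "tail_below n (Suc i) (max q j) v"
    using tail_below_swap[OF permutes_inj[OF v(1)] v(2) _ j(2,3,1) v(3)] by blast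
qed (use j in \<open>auto intro: tail_below_mono\<close>)

lemma supported_on_bpd_op_pair_tail:
  assumes F: "supported_on n (decreasing_after n i) F" and i: "Suc i < n"
  shows "supported_on n (tail_below n (Suc i) (Suc (Suc i)))
           (bpd_op n s i (Suc (Suc i)) (bpd_op n s i (Suc i) F))"
proof -
  have "supported_on n (tail_below n (Suc i) (Suc (Suc i))) F"
    by (rule supported_on_mono[OF F]) (use i in \<open>simp add: decreasing_after_def tail_below_def\<close>)
  then have "supported_on n (tail_below n (Suc i) (Suc (Suc i))) (bpd_op n s i (Suc i) F)"
    using supported_on_bpd_op_tail[of n i "Suc (Suc i)" F "Suc i"] i by simp
  then show ?thesis
    using supported_on_bpd_op_tail[of n i "Suc (Suc i)" _ "Suc (Suc i)"] i by simp
qed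

lemma d_act_eq_0_if_tail_below:
  assumes H: "supported_on n (tail_below n c q) H" and q: "1 \<le> c" "Suc c \<le> q" "Suc q \<le> n"
  shows "d_act n c (Suc q) H v = 0"
proof (rule ccontr)
  assume "d_act n c (Suc q) H v \<noteq> 0"
  moreover have "c < Suc q" using q by simp
  ultimately have nz: "covered_by_swap v c (Suc q)" "H (v \<circ> transpose c (Suc q)) \<noteq> 0"
    using d_act_nonzero q by blast+
  then have "tail_below n c q (v \<circ> transpose c (Suc q))"
    using H unfolding supported_on_def by blast
  then have "v c < v (Suc c)" "v (Suc c) < v (Suc q)"
    using q unfolding tail_below_def by auto
  then show False using covered_by_swapD[OF nz(1), of "Suc c"] q by auto
qed

lemma bpd_op_tail_eq:
  assumes "supported_on n (tail_below n (Suc i) q) H" "Suc (Suc i) \<le> q"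
  shows "act_prod H (map (bpd_op n s (Suc i)) [Suc q..<Suc n])
           = act_prod H (map (bpd_op n s i) [Suc q..<Suc n])"
  using assms
proof (induction "n - q" arbitrary: q H)
  case 0
  then show ?case by simp
next
  case (Suc m)
  then have q: "Suc q \<le> n" by simp
  have "bpd_op n s (Suc i) (Suc q) H = bpd_op n s i (Suc q) H"
    using d_act_eq_0_if_tail_below[OF Suc.prems(1) _ Suc.prems(2) q]
    by (simp add: fun_eq_iff bpd_op_apply B_op_Suc)
  moreover have "supported_on n (tail_below n (Suc i) (Suc q)) (bpd_op n s i (Suc q) H)"
    using supported_on_bpd_op_tail[OF Suc.prems(1,2) _ _ q] Suc.prems(2) by (simp add: max_def)
  moreover have "[Suc q..<Suc n] = Suc q # [Suc (Suc q)..<Suc n]"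
    using q by (simp add: upt_conv_Cons)
  ultimately show ?case
    using Suc.hyps(1)[of "Suc q"] Suc.hyps(2) Suc.prems(2) by simp
qed

lemma dunkl_row_eq_bpd_row:
  assumes "i < n" "supported_on n (decreasing_after n i) F"
  shows "act_prod F (map (dunkl_op n s) [Suc i..<Suc n]) = act_prod F (map (bpd_op n s i) [Suc i..<Suc n])"
  using assms
proof (induction "n - i" arbitrary: i F)
  case 0
  then show ?case by simp
next
  case (Suc m)
  note F = Suc.prems(2)
  show ?case
  proof (cases "Suc i = n")
    case True
    then show ?thesis using dunkl_op_last[of i s] by simp
  next
    case False
    then have i: "Suc i < n" using Suc.prems(1) by simp
    define G where "G = dunkl_op n s (Suc i) F"
    define H where "H = bpd_op n s i (Suc (Suc i)) (bpd_op n s i (Suc i) F)"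
    have "supported_on n (tail_below n (Suc i) (Suc (Suc i))) H"
      unfolding H_def by (rule supported_on_bpd_op_pair_tail[OF F i])
    then have tail: "act_prod H (map (bpd_op n s (Suc i)) [Suc (Suc (Suc i))..<Suc n])
        = act_prod H (map (bpd_op n s i) [Suc (Suc (Suc i))..<Suc n])"
      by (rule bpd_op_tail_eq) simp
    have "act_prod F (map (dunkl_op n s) [Suc i..<Suc n])
        = act_prod G (map (dunkl_op n s) [Suc (Suc i)..<Suc n])"
      using i by (simp add: upt_conv_Cons G_def del: upt_Suc)
    also have "\<dots> = act_prod G (map (bpd_op n s (Suc i)) [Suc (Suc i)..<Suc n])"
      using Suc.hyps(1)[of "Suc i" G] Suc.hyps(2) i supported_on_dunkl_op[OF F i]
      by (simp add: G_def)
    also have "\<dots> = act_prod H (map (bpd_op n s (Suc i)) [Suc (Suc (Suc i))..<Suc n])"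
      using i bpd_op_dunkl_op_exchange[OF F i]
      by (simp add: upt_conv_Cons G_def H_def del: upt_Suc)
    also have "\<dots> = act_prod H (map (bpd_op n s i) [Suc (Suc (Suc i))..<Suc n])"
      by (rule tail)
    also have "\<dots> = act_prod F (map (bpd_op n s i) [Suc i..<Suc n])"
      using i by (simp add: upt_conv_Cons H_def del: upt_Suc)
    finally show ?thesis .
  qed
qed

lemma dunkl_rows_eq_bpd_rows:
  assumes "supported_on n (decreasing_after n i) F"
  shows "act_prod F (concat (map (\<lambda>i. map (dunkl_op n (x i)) [Suc i..<Suc n]) [i..<n]))
           = act_prod F (concat (map (R_factors n x) [i..<n]))"
  using assms
proof (induction "n - i" arbitrary: i F)
  case 0
  then show ?case by simp
next
  case (Suc m)
  then have i: "i < n" by simp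
  define H where "H = act_prod F (map (bpd_op n (x i) i) [Suc i..<Suc n])"
  have "supported_on n (decreasing_after n (Suc i)) F"
    using Suc.prems by (rule supported_on_mono) (simp add: decreasing_after_mono)
  then have "supported_on n (decreasing_after n (Suc i)) H"
    unfolding H_def by (rule supported_on_bpd_row) (simp del: upt_Suc)
  then have "act_prod H (concat (map (\<lambda>i. map (dunkl_op n (x i)) [Suc i..<Suc n]) [Suc i..<n]))
      = act_prod H (concat (map (R_factors n x) [Suc i..<n]))"
    using Suc.hyps by simp
  moreover have "act_prod F (map (dunkl_op n (x i)) [Suc i..<Suc n]) = H"
    unfolding H_def by (rule dunkl_row_eq_bpd_row[OF i Suc.prems])
  ultimately show ?case
    using i by (simp add: upt_conv_Cons act_prod_append R_factors_eq H_def del: upt_Suc)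
qed

section \<open>The Fomin-Kirillov relations and commuting Dunkl elements\<close>

lemma if_eq_add_if_exclusive:
  fixes a :: "'a::comm_monoid_add"
  shows "(P \<longleftrightarrow> Q \<or> R) \<Longrightarrow> \<not> (Q \<and> R)
           \<Longrightarrow> (if P then a else 0) = (if Q then a else 0) + (if R then a else 0)"
  by auto

lemma cover_chains_three_term_1:
  assumes inj: "inj w" and xyz: "x < y" "y < z"
  shows "covered_by_swap w y z \<and> covered_by_swap (w \<circ> transpose y z) x y
           \<longleftrightarrow> covered_by_swap w x y \<and> covered_by_swap (w \<circ> transpose x y) x z
             \<or> covered_by_swap w x z \<and> covered_by_swap (w \<circ> transpose x z) y z"
    and "\<not> ((covered_by_swap w x y \<and> covered_by_swap (w \<circ> transpose x y) x z)
           \<and> (covered_by_swap w x z \<and> covered_by_swap (w \<circ> transpose x z) y z))"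
proof -
  have ne: "w x \<noteq> w y" "w x \<noteq> w z" "w y \<noteq> w z"
    using xyz injD[OF inj] by (metis less_irrefl order.strict_trans)+
  have L: "covered_by_swap (w \<circ> transpose y z) x y
      \<longleftrightarrow> w x < w z \<and> no_value_between w x y (w x) (w z)"
    using xyz by (subst covered_by_swap_cong[where w = w]) auto
  have R1: "covered_by_swap (w \<circ> transpose x y) x z
      \<longleftrightarrow> w y < w z \<and> no_value_between w x y (w y) (w z) \<and> \<not> (w y < w x \<and> w x < w z)
          \<and> no_value_between w y z (w y) (w z)"
    using xyz by (subst covered_by_swap_through_middle[OF xyz, where w = w]) auto
  have R2: "covered_by_swap w x z
      \<longleftrightarrow> w x < w z \<and> no_value_between w x y (w x) (w z) \<and> \<not> (w x < w y \<and> w y < w z)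
          \<and> no_value_between w y z (w x) (w z)"
    by (rule covered_by_swap_through_middle[OF xyz]) simp
  have R2': "covered_by_swap (w \<circ> transpose x z) y z
      \<longleftrightarrow> w y < w x \<and> no_value_between w y z (w y) (w x)"
    using xyz by (subst covered_by_swap_cong[where w = w]) auto
  have M1: "w x < w y \<Longrightarrow> w y < w z \<Longrightarrow> no_value_between w x y (w x) (w y)
      \<and> no_value_between w x y (w y) (w z) \<longleftrightarrow> no_value_between w x y (w x) (w z)"
    by (rule no_value_between_merge) (auto dest: injD[OF inj])
  have M2: "w y < w x \<Longrightarrow> w x < w z \<Longrightarrow> no_value_between w y z (w y) (w x)
      \<and> no_value_between w y z (w x) (w z) \<longleftrightarrow> no_value_between w y z (w y) (w z)"
    using xyz by (intro no_value_between_merge) (auto dest: injD[OF inj])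
  show "covered_by_swap w y z \<and> covered_by_swap (w \<circ> transpose y z) x y
      \<longleftrightarrow> covered_by_swap w x y \<and> covered_by_swap (w \<circ> transpose x y) x z
        \<or> covered_by_swap w x z \<and> covered_by_swap (w \<circ> transpose x z) y z"
    unfolding L R1 R2 R2' using ne M1 M2
    by (cases "w x < w y"; cases "w y < w z"; cases "w x < w z") (auto simp: covered_by_swap_def)
  show "\<not> ((covered_by_swap w x y \<and> covered_by_swap (w \<circ> transpose x y) x z)
      \<and> (covered_by_swap w x z \<and> covered_by_swap (w \<circ> transpose x z) y z))"
    unfolding R2' by (auto simp: covered_by_swap_def)
qed

lemma cover_chains_three_term_2:
  assumes inj: "inj w" and xyz: "x < y" "y < z"
  shows "covered_by_swap w x y \<and> covered_by_swap (w \<circ> transpose x y) y z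
           \<longleftrightarrow> covered_by_swap w x z \<and> covered_by_swap (w \<circ> transpose x z) x y
             \<or> covered_by_swap w y z \<and> covered_by_swap (w \<circ> transpose y z) x z"
    and "\<not> ((covered_by_swap w x z \<and> covered_by_swap (w \<circ> transpose x z) x y)
           \<and> (covered_by_swap w y z \<and> covered_by_swap (w \<circ> transpose y z) x z))"
proof -
  have ne: "w x \<noteq> w y" "w x \<noteq> w z" "w y \<noteq> w z"
    using xyz injD[OF inj] by (metis less_irrefl order.strict_trans)+
  have L: "covered_by_swap (w \<circ> transpose x y) y z
      \<longleftrightarrow> w x < w z \<and> no_value_between w y z (w x) (w z)"
    using xyz by (subst covered_by_swap_cong[where w = w]) auto
  have R1: "covered_by_swap w x z
      \<longleftrightarrow> w x < w z \<and> no_value_between w x y (w x) (w z) \<and> \<not> (w x < w y \<and> w y < w z)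
          \<and> no_value_between w y z (w x) (w z)"
    by (rule covered_by_swap_through_middle[OF xyz]) simp
  have R1': "covered_by_swap (w \<circ> transpose x z) x y
      \<longleftrightarrow> w z < w y \<and> no_value_between w x y (w z) (w y)"
    using xyz by (subst covered_by_swap_cong[where w = w]) auto
  have R2': "covered_by_swap (w \<circ> transpose y z) x z
      \<longleftrightarrow> w x < w y \<and> no_value_between w x y (w x) (w y) \<and> \<not> (w x < w z \<and> w z < w y)
          \<and> no_value_between w y z (w x) (w y)"
    using xyz by (subst covered_by_swap_through_middle[OF xyz, where w = w]) auto
  have M1: "w x < w z \<Longrightarrow> w z < w y \<Longrightarrow> no_value_between w x y (w x) (w z)
      \<and> no_value_between w x y (w z) (w y) \<longleftrightarrow> no_value_between w x y (w x) (w y)"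
    using xyz by (intro no_value_between_merge) (auto dest: injD[OF inj])
  have M2: "w x < w y \<Longrightarrow> w y < w z \<Longrightarrow> no_value_between w y z (w x) (w y)
      \<and> no_value_between w y z (w y) (w z) \<longleftrightarrow> no_value_between w y z (w x) (w z)"
    by (rule no_value_between_merge) (auto dest: injD[OF inj])
  show "covered_by_swap w x y \<and> covered_by_swap (w \<circ> transpose x y) y z
      \<longleftrightarrow> covered_by_swap w x z \<and> covered_by_swap (w \<circ> transpose x z) x y
        \<or> covered_by_swap w y z \<and> covered_by_swap (w \<circ> transpose y z) x z"
    unfolding L R1 R1' R2' using ne M1 M2
    by (cases "w x < w y"; cases "w y < w z"; cases "w x < w z") (auto simp: covered_by_swap_def)
  show "\<not> ((covered_by_swap w x z \<and> covered_by_swap (w \<circ> transpose x z) x y)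
      \<and> (covered_by_swap w y z \<and> covered_by_swap (w \<circ> transpose y z) x z))"
    unfolding R1' by (auto simp: covered_by_swap_def)
qed

lemma d_act_three_term_1:
  assumes "1 \<le> x" "x < y" "y < z" "z \<le> n"
  shows "d_act n y z (d_act n x y F) w = d_act n x y (d_act n x z F) w + d_act n x z (d_act n y z F) w"
proof -
  define \<sigma> where "\<sigma> = w \<circ> transpose y z \<circ> transpose x y"
  have "w \<circ> transpose x y \<circ> transpose x z = \<sigma>" "w \<circ> transpose x z \<circ> transpose y z = \<sigma>"
    using assms by (auto simp: fun_eq_iff \<sigma>_def transpose_def)
  then have "d_act n y z (d_act n x y F) w = (if w permutes {1..n} \<and> covered_by_swap w y z
        \<and> covered_by_swap (w \<circ> transpose y z) x y then F \<sigma> else 0)"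
    "d_act n x y (d_act n x z F) w = (if w permutes {1..n} \<and> covered_by_swap w x y
        \<and> covered_by_swap (w \<circ> transpose x y) x z then F \<sigma> else 0)"
    "d_act n x z (d_act n y z F) w = (if w permutes {1..n} \<and> covered_by_swap w x z
        \<and> covered_by_swap (w \<circ> transpose x z) y z then F \<sigma> else 0)"
    using assms by (simp_all add: d_act_d_act \<sigma>_def)
  then show ?thesis
    using cover_chains_three_term_1[OF permutes_inj, of w "{1..n}" x y z] assms
    by (cases "w permutes {1..n}") (simp_all add: if_eq_add_if_exclusive)
qed

lemma d_act_three_term_2:
  assumes "1 \<le> x" "x < y" "y < z" "z \<le> n"
  shows "d_act n x y (d_act n y z F) w = d_act n x z (d_act n x y F) w + d_act n y z (d_act n x z F) w"
proof -
  define \<sigma> where "\<sigma> = w \<circ> transpose x y \<circ> transpose y z"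
  have "w \<circ> transpose x z \<circ> transpose x y = \<sigma>" "w \<circ> transpose y z \<circ> transpose x z = \<sigma>"
    using assms by (auto simp: fun_eq_iff \<sigma>_def transpose_def)
  then have "d_act n x y (d_act n y z F) w = (if w permutes {1..n} \<and> covered_by_swap w x y
        \<and> covered_by_swap (w \<circ> transpose x y) y z then F \<sigma> else 0)"
    "d_act n x z (d_act n x y F) w = (if w permutes {1..n} \<and> covered_by_swap w x z
        \<and> covered_by_swap (w \<circ> transpose x z) x y then F \<sigma> else 0)"
    "d_act n y z (d_act n x z F) w = (if w permutes {1..n} \<and> covered_by_swap w y z
        \<and> covered_by_swap (w \<circ> transpose y z) x z then F \<sigma> else 0)"
    using assms by (simp_all add: d_act_d_act \<sigma>_def)
  then show ?thesis
    using cover_chains_three_term_2[OF permutes_inj, of w "{1..n}" x y z] assms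
    by (cases "w permutes {1..n}") (simp_all add: if_eq_add_if_exclusive)
qed

lemma cover_chains_crossing:
  assumes inj: "inj w" and xzyu: "x < z" "z < y" "y < u"
  shows "covered_by_swap w z u \<and> covered_by_swap (w \<circ> transpose z u) x y
           \<longleftrightarrow> covered_by_swap w x y \<and> covered_by_swap (w \<circ> transpose x y) z u"
proof -
  have ne: "w x \<noteq> w z" "w x \<noteq> w u" "w y \<noteq> w z" "w y \<noteq> w u"
    using xzyu injD[OF inj] by (metis less_irrefl order.strict_trans)+
  have A1: "covered_by_swap (w \<circ> transpose z u) x y
      \<longleftrightarrow> w x < w y \<and> no_value_between w x z (w x) (w y) \<and> \<not> (w x < w u \<and> w u < w y)
          \<and> no_value_between w z y (w x) (w y)"
    using xzyu by (subst covered_by_swap_through_middle[of x z y _ w]) auto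
  have A2: "covered_by_swap w x y
      \<longleftrightarrow> w x < w y \<and> no_value_between w x z (w x) (w y) \<and> \<not> (w x < w z \<and> w z < w y)
          \<and> no_value_between w z y (w x) (w y)"
    using xzyu by (intro covered_by_swap_through_middle) auto
  have A3: "covered_by_swap w z u
      \<longleftrightarrow> w z < w u \<and> no_value_between w z y (w z) (w u) \<and> \<not> (w z < w y \<and> w y < w u)
          \<and> no_value_between w y u (w z) (w u)"
    using xzyu by (intro covered_by_swap_through_middle) auto
  have A4: "covered_by_swap (w \<circ> transpose x y) z u
      \<longleftrightarrow> w z < w u \<and> no_value_between w z y (w z) (w u) \<and> \<not> (w z < w x \<and> w x < w u)
          \<and> no_value_between w y u (w z) (w u)"
    using xzyu by (subst covered_by_swap_through_middle[of z y u _ w]) auto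
  have "w x < w y \<Longrightarrow> w z < w u \<Longrightarrow>
      \<not> (w z < w y \<and> w y < w u) \<and> \<not> (w x < w u \<and> w u < w y)
      \<longleftrightarrow> \<not> (w x < w z \<and> w z < w y) \<and> \<not> (w z < w x \<and> w x < w u)"
    using ne by linarith
  then show ?thesis unfolding A1 A2 A3 A4 by blast
qed

lemma cover_chains_disjoint_ordered:
  assumes inj: "inj w" and xyzu: "x < y" "z < u" "x < z" and d: "y \<noteq> z" "y \<noteq> u"
  shows "covered_by_swap w z u \<and> covered_by_swap (w \<circ> transpose z u) x y
           \<longleftrightarrow> covered_by_swap w x y \<and> covered_by_swap (w \<circ> transpose x y) z u"
proof -
  consider "y < z" | "u < y" | "z < y" "y < u" using xyzu d by linarith
  then show ?thesis
  proof cases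
    case 1
    have "no_value_between (w \<circ> transpose z u) x y lo hi \<longleftrightarrow> no_value_between w x y lo hi"
      "no_value_between (w \<circ> transpose x y) z u lo hi \<longleftrightarrow> no_value_between w z u lo hi" for lo hi
      using xyzu 1 by (auto intro!: no_value_between_cong)
    then show ?thesis using xyzu 1 by (auto simp: covered_by_swap_def)
  next
    case 2
    then have "covered_by_swap (w \<circ> transpose z u) x y \<longleftrightarrow> covered_by_swap w x y"
      using xyzu by (simp add: covered_by_swap_def no_value_between_comp_transpose_inside)
    moreover have "no_value_between (w \<circ> transpose x y) z u lo hi \<longleftrightarrow> no_value_between w z u lo hi"
      for lo hi using xyzu 2 by (auto intro!: no_value_between_cong)
    then have "covered_by_swap (w \<circ> transpose x y) z u \<longleftrightarrow> covered_by_swap w z u"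
      using xyzu 2 by (simp add: covered_by_swap_def)
    ultimately show ?thesis by blast
  next
    case 3
    then show ?thesis by (rule cover_chains_crossing[OF inj xyzu(3)])
  qed
qed

lemma cover_chains_disjoint:
  assumes "inj w" "x < y" "z < u" "x \<noteq> z" "x \<noteq> u" "y \<noteq> z" "y \<noteq> u"
  shows "covered_by_swap w z u \<and> covered_by_swap (w \<circ> transpose z u) x y
           \<longleftrightarrow> covered_by_swap w x y \<and> covered_by_swap (w \<circ> transpose x y) z u"
proof (cases "x < z")
  case True
  then show ?thesis using cover_chains_disjoint_ordered assms by blast
next
  case False
  then have "z < x" using assms by simp
  then show ?thesis using cover_chains_disjoint_ordered[of w z u x y] assms by auto
qed

lemma d_act_commute_disjoint:
  assumes "1 \<le> x" "x < y" "y \<le> n" "1 \<le> z" "z < u" "u \<le> n"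
    and "x \<noteq> z" "x \<noteq> u" "y \<noteq> z" "y \<noteq> u"
  shows "d_act n z u (d_act n x y F) w = d_act n x y (d_act n z u F) w"
proof -
  have "w \<circ> transpose z u \<circ> transpose x y = w \<circ> transpose x y \<circ> transpose z u"
    using assms by (auto simp: fun_eq_iff transpose_def)
  then show ?thesis
    using cover_chains_disjoint[OF permutes_inj, of w "{1..n}" x y z u] assms
    by (cases "w permutes {1..n}") (simp_all add: d_act_d_act)
qed

definition signed_d :: "nat \<Rightarrow> nat \<Rightarrow> nat \<Rightarrow> 'a::comm_ring_1 op" where
  "signed_d n a k = (if a < k then d_act n a k else op_neg (d_act n k a))"

lemma signed_d_less: "a < k \<Longrightarrow> signed_d n a k = d_act n a k"
  by (simp add: signed_d_def)

lemma signed_d_greater: "k < a \<Longrightarrow> signed_d n a k = op_neg (d_act n k a)"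
  by (simp add: signed_d_def)

lemma signed_d_sum: "signed_d n a k (\<lambda>v. \<Sum>l\<in>L. G l v) w = (\<Sum>l\<in>L. signed_d n a k (G l) w)"
  by (simp add: signed_d_def d_act_sum sum_negf)

lemma theta_op_eq_signed_sum:
  assumes "1 \<le> a" "a \<le> n"
  shows "theta_op n a F w = (\<Sum>k\<in>{1..n} - {a}. signed_d n a k F w)"
proof -
  have U: "{1..n} - {a} = {1..<a} \<union> {a<..n}" using assms by auto
  have "(\<Sum>k\<in>{1..n} - {a}. signed_d n a k F w)
      = (\<Sum>k\<in>{1..<a}. signed_d n a k F w) + (\<Sum>k\<in>{a<..n}. signed_d n a k F w)"
    unfolding U by (rule sum.union_disjoint) auto
  also have "(\<Sum>k\<in>{1..<a}. signed_d n a k F w) = - (\<Sum>k\<in>{1..<a}. d_act n k a F w)"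
    by (simp add: signed_d_greater sum_negf)
  also have "(\<Sum>k\<in>{a<..n}. signed_d n a k F w) = (\<Sum>k\<in>{a<..n}. d_act n a k F w)"
    by (simp add: signed_d_less)
  finally show ?thesis by (simp add: theta_op_apply)
qed

lemma signed_d_commute_disjoint:
  assumes "a \<in> {1..n}" "k \<in> {1..n}" "b \<in> {1..n}" "l \<in> {1..n}" "a \<noteq> k" "b \<noteq> l"
    and "a \<noteq> b" "a \<noteq> l" "k \<noteq> b" "k \<noteq> l"
  shows "signed_d n b l (signed_d n a k F) w = signed_d n a k (signed_d n b l F) w"
proof -
  consider "a < k" "b < l" | "a < k" "l < b" | "k < a" "b < l" | "k < a" "l < b"
    using assms by linarith
  then show ?thesis
  proof cases
    case 1
    have "d_act n b l (d_act n a k F) w = d_act n a k (d_act n b l F) w"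
      by (rule d_act_commute_disjoint) (use assms 1 in simp_all)
    then show ?thesis using 1 by (simp add: signed_d_def)
  next
    case 2
    have "d_act n l b (d_act n a k F) w = d_act n a k (d_act n l b F) w"
      by (rule d_act_commute_disjoint) (use assms 2 in simp_all)
    then show ?thesis using 2 by (simp add: signed_d_def op_neg_def d_act_uminus)
  next
    case 3
    have "d_act n b l (d_act n k a F) w = d_act n k a (d_act n b l F) w"
      by (rule d_act_commute_disjoint) (use assms 3 in simp_all)
    then show ?thesis using 3 by (simp add: signed_d_def op_neg_def d_act_uminus)
  next
    case 4
    have "d_act n l b (d_act n k a F) w = d_act n k a (d_act n l b F) w"
      by (rule d_act_commute_disjoint) (use assms 4 in simp_all)
    then show ?thesis using 4 by (simp add: signed_d_def op_neg_def d_act_uminus)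
  qed
qed

lemma signed_d_opposite_eq_0:
  assumes "a \<noteq> b"
  shows "signed_d n b a (signed_d n a b F) w = 0"
proof (cases "a < b")
  case True
  then show ?thesis by (simp add: signed_d_def d_act_square_zero)
next
  case False
  then have "b < a" using assms by simp
  then show ?thesis by (simp add: signed_d_def op_neg_def d_act_uminus d_act_square_zero)
qed

lemma signed_d_three_term:
  assumes "a \<in> {1..n}" "b \<in> {1..n}" "c \<in> {1..n}" "a \<noteq> b" "a \<noteq> c" "b \<noteq> c"
  shows "(signed_d n b c (signed_d n a b F) w - signed_d n a b (signed_d n b c F) w)
       + (signed_d n b a (signed_d n a c F) w - signed_d n a c (signed_d n b a F) w)
       + (signed_d n b c (signed_d n a c F) w - signed_d n a c (signed_d n b c F) w) = 0"
proof -
  note rel = d_act_three_term_1 d_act_three_term_2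
  consider "a < b" "b < c" | "a < c" "c < b" | "b < a" "a < c" | "b < c" "c < a"
    | "c < a" "a < b" | "c < b" "b < a"
    using assms by linarith
  then show ?thesis
  proof cases
    case 1
    then show ?thesis using assms rel[of a b c n F w]
      by (simp add: signed_d_def op_neg_def d_act_uminus algebra_simps)
  next
    case 2
    then show ?thesis using assms rel[of a c b n F w]
      by (simp add: signed_d_def op_neg_def d_act_uminus algebra_simps)
  next
    case 3
    then show ?thesis using assms rel[of b a c n F w]
      by (simp add: signed_d_def op_neg_def d_act_uminus algebra_simps)
  next
    case 4
    then show ?thesis using assms rel[of b c a n F w]
      by (simp add: signed_d_def op_neg_def d_act_uminus algebra_simps)
  next
    case 5
    then show ?thesis using assms rel[of c a b n F w]
      by (simp add: signed_d_def op_neg_def d_act_uminus algebra_simps)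
  next
    case 6
    then show ?thesis using assms rel[of c b a n F w]
      by (simp add: signed_d_def op_neg_def d_act_uminus algebra_simps)
  qed
qed

lemma theta_op_theta_op_eq:
  assumes "a \<in> {1..n}" "b \<in> {1..n}"
  shows "theta_op n b (theta_op n a F) w
           = (\<Sum>k\<in>{1..n} - {a}. \<Sum>l\<in>{1..n} - {b}. signed_d n b l (signed_d n a k F) w)"
proof -
  have "theta_op n a F = (\<lambda>v. \<Sum>k\<in>{1..n} - {a}. signed_d n a k F v)"
    using assms by (simp add: fun_eq_iff theta_op_eq_signed_sum)
  then have "theta_op n b (theta_op n a F) w
      = (\<Sum>l\<in>{1..n} - {b}. \<Sum>k\<in>{1..n} - {a}. signed_d n b l (signed_d n a k F) w)"
    using assms by (simp add: theta_op_eq_signed_sum signed_d_sum)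
  then show ?thesis by (simp only: sum.swap[of _ "{1..n} - {b}"])
qed

lemma theta_op_commute:
  fixes F :: "'a::comm_ring_1 grp_elt"
  assumes ab: "a \<in> {1..n}" "b \<in> {1..n}"
  shows "theta_op n a (theta_op n b F) = theta_op n b (theta_op n a F)"
proof (cases "a = b")
  case False
  show ?thesis
  proof (rule ext)
    fix w
    define K where "K = {1..n} - {a, b}"
    define Z where "Z k l = signed_d n b l (signed_d n a k F) w - signed_d n a k (signed_d n b l F) w"
      for k l
    have Ka: "{1..n} - {a} = insert b K" and Kb: "{1..n} - {b} = insert a K"
      and abK: "a \<notin> K" "b \<notin> K" and fin: "finite K"
      using ab False by (auto simp: K_def)
    have diagonal: "(\<Sum>l\<in>K. Z k l) = Z k k" if k: "k \<in> K" for k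
    proof -
      have "Z k l = 0" if "l \<in> K - {k}" for l
      proof -
        have "signed_d n b l (signed_d n a k F) w = signed_d n a k (signed_d n b l F) w"
          by (rule signed_d_commute_disjoint) (use that k ab False in \<open>auto simp: K_def\<close>)
        then show ?thesis by (simp add: Z_def)
      qed
      then show ?thesis
        using sum.remove[OF fin k, of "Z k"] by simp
    qed
    have "theta_op n b (theta_op n a F) w - theta_op n a (theta_op n b F) w
        = (\<Sum>k\<in>insert b K. \<Sum>l\<in>insert a K. Z k l)"
      unfolding theta_op_theta_op_eq[OF ab] theta_op_theta_op_eq[OF ab(2,1)] Ka Kb Z_def
      by (simp add: sum_subtractf sum.swap[of _ "insert a K"])
    also have "\<dots> = Z b a + (\<Sum>c\<in>K. Z b c + Z c a + Z c c)"
      using abK fin by (simp add: sum.distrib diagonal add.assoc)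
    also have "\<dots> = 0"
      using ab False signed_d_three_term[of a n b _ F w]
      by (simp add: Z_def signed_d_opposite_eq_0 K_def)
    finally show "theta_op n a (theta_op n b F) w = theta_op n b (theta_op n a F) w"
      by simp
  qed
qed simp

lemma dunkl_op_commute:
  assumes "j \<in> {1..n}" "l \<in> {1..n}"
  shows "dunkl_op n s j (dunkl_op n t l F) = dunkl_op n t l (dunkl_op n s j F)"
proof (rule ext)
  fix w
  show "dunkl_op n s j (dunkl_op n t l F) w = dunkl_op n t l (dunkl_op n s j F) w"
    using fun_cong[OF theta_op_commute[OF assms, of F], of w]
    by (simp add: dunkl_op_apply[abs_def] theta_op_scale_diff algebra_simps)
qed

section \<open>Reordering the factors\<close>

lemma act_prod_map_perm:
  assumes "mset xs = mset ys" "\<And>a b. a \<in> set xs \<Longrightarrow> b \<in> set xs \<Longrightarrow> f a \<circ> f b = f b \<circ> f a"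
  shows "act_prod F (map f xs) = act_prod F (map f ys)"
proof -
  have "fold f xs = fold f ys"
    by (rule fold_multiset_equiv[OF assms(2,1)])
  then show ?thesis by (simp add: act_prod_def foldl_conv_fold fold_map comp_def)
qed

lemma dunkl_factor_eq: "dunkl_factor n x p = dunkl_op n (x (fst p)) (snd p)"
  by (simp add: dunkl_factor_def dunkl_op_def)

lemma dunkl_factor_commute:
  assumes "snd p \<in> {1..n}" "snd q \<in> {1..n}"
  shows "dunkl_factor n x p \<circ> dunkl_factor n x q = dunkl_factor n x q \<circ> dunkl_factor n x p"
  unfolding dunkl_factor_eq comp_def by (intro ext dunkl_op_commute assms)

definition upper_pairs :: "nat \<Rightarrow> (nat \<times> nat) list" where
  "upper_pairs n = concat (map (\<lambda>i. map (\<lambda>j. (i, j)) [Suc i..<Suc n]) [1..<n])"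

lemma set_upper_pairs: "set (upper_pairs n) = {(i, j). 1 \<le> i \<and> i < j \<and> j \<le> n}"
proof (intro equalityI subsetI)
  fix p assume "p \<in> {(i, j). 1 \<le> i \<and> i < j \<and> j \<le> n}"
  then obtain i j where "p = (i, j)" "i \<in> set [1..<n]" "j \<in> set [Suc i..<Suc n]"
    by (auto simp del: upt_Suc)
  then show "p \<in> set (upper_pairs n)"
    unfolding upper_pairs_def set_concat set_map by (auto simp del: upt_Suc intro!: bexI[of _ i])
qed (auto simp: upper_pairs_def)

lemma distinct_upper_pairs: "distinct (upper_pairs n)"
  unfolding upper_pairs_def
  by (intro distinct_concat) (auto simp: distinct_map inj_on_def)

lemma supported_on_w0: "supported_on n (decreasing_after n i) (basis_elt (w0 n))"
proof -
  have inv: "w0 n (w0 n k) = k" for k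
    unfolding w0_def by (cases "1 \<le> k \<and> k \<le> n") auto
  have "w0 n permutes {1..n}"
    unfolding permutes_def
  proof (intro conjI allI impI)
    show "w0 n k = k" if "k \<notin> {1..n}" for k using that unfolding w0_def by auto
    show "\<exists>!k. w0 n k = y" for y using inv by metis
  qed
  moreover have "decreasing_after n i (w0 n)"
    unfolding decreasing_after_def w0_def by auto
  ultimately show ?thesis
    by (simp add: supported_on_def basis_elt_def)
qed

theorem S_BPD_eq_dunkl_product:
  fixes x :: "nat \<Rightarrow> 'a::comm_ring_1"
  assumes "distinct ps" "set ps = {(i, j). 1 \<le> i \<and> i < j \<and> j \<le> n}"
  shows "S_BPD n x = act_prod (basis_elt (w0 n)) (map (dunkl_factor n x) ps)"
proof -
  have "set ps = set (upper_pairs n)"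
    using assms(2) by (simp only: set_upper_pairs)
  then have "mset ps = mset (upper_pairs n)"
    using set_eq_iff_mset_eq_distinct[OF assms(1) distinct_upper_pairs] by blast
  then have "act_prod (basis_elt (w0 n)) (map (dunkl_factor n x) ps)
      = act_prod (basis_elt (w0 n)) (map (dunkl_factor n x) (upper_pairs n))"
  proof (rule act_prod_map_perm)
    fix p q assume "p \<in> set ps" "q \<in> set ps"
    then show "dunkl_factor n x p \<circ> dunkl_factor n x q = dunkl_factor n x q \<circ> dunkl_factor n x p"
      using assms(2) by (intro dunkl_factor_commute) auto
  qed
  also have "map (dunkl_factor n x) (upper_pairs n)
      = concat (map (\<lambda>i. map (dunkl_op n (x i)) [Suc i..<Suc n]) [1..<n])"
    by (simp add: upper_pairs_def dunkl_factor_eq map_concat comp_def)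
  also have "act_prod (basis_elt (w0 n)) \<dots> = S_BPD n x"
    unfolding S_BPD_def by (rule dunkl_rows_eq_bpd_rows[OF supported_on_w0])
  finally show ?thesis ..
qed

theorem proposition4p25:
  fixes n :: nat and ps :: "(nat \<times> nat) list"
  assumes "n \<ge> 1"
    and "distinct ps"
    and "set ps = {(i, j). 1 \<le> i \<and> i < j \<and> j \<le> n}"
  shows "S_BPD n Xvar = act_prod (basis_elt (w0 n)) (map (dunkl_factor n Xvar) ps)"
  \<comment> \<open>The identity holds over any commutative ring and for every n.\<close>
  using assms(2,3) by (rule S_BPD_eq_dunkl_product)

end
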